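(* Let $G$ be a commutative group, $H$ a subgroup, $G'=G/H$ and $\varphi:G\to G'$ the natural homomorphism. Let $U\subset G$ be a nonempty finite set, $V=\varphi(U)$, and $1<p<\infty$. Then \[ \beta_p(U)\ge\beta_p(V)\min_{x\in V}\beta_p\bigl(U\cap\varphi^{-1}(x)\bigr), \] where $\beta_p(V)$ is computed in $G'$ and the other quantities in $G$.
   Context: For a finite set $U$ in a commutative group $K$ and $1<p<\infty$, $\beta_p(U)=\inf_{A,B}\frac{|A+B+U|}{|A|^{1/p}|B|^{1-1/p}}$, the infimum over all nonempty finite $A,B\subset K$. *)

theory Defs
  imports Complex_Main "HOL-Algebra.Coset"
begin

definition beta :: "('a, 'b) monoid_scheme \<Rightarrow> real \<Rightarrow> 'a set \<Rightarrow> real" where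
  "beta K p U =
     (INF AB \<in> {(A, B). A \<subseteq> carrier K \<and> finite A \<and> A \<noteq> {} \<and>
                        B \<subseteq> carrier K \<and> finite B \<and> B \<noteq> {}}.
        real (card (set_mult K (set_mult K (fst AB) (snd AB)) U)) /
        (real (card (fst AB)) powr (1 / p) * real (card (snd AB)) powr (1 - 1 / p)))"

end

theory Submission
  imports Defs "HOL-Analysis.Analysis"
begin

text \<open>Write \<open>\<phi>\<close> for the quotient map, \<open>t = 1/p\<close>, and \<open>m\<close> for the minimum of \<open>\<beta>\<^sub>p\<close> over the
  fibres \<open>U\<^sub>x\<close> of \<open>U\<close>. Given \<open>A\<close>, \<open>B\<close>, split them into fibres \<open>A\<^sub>i\<close>, \<open>B\<^sub>j\<close> over cosets. Each coset \<open>w\<close> in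
  \<open>i + j + \<phi>(U)\<close> is \<open>i + j + x\<close> with \<open>x = \<phi>(u)\<close>, and the part of \<open>A + B + U\<close> lying in \<open>w\<close> contains
  \<open>A\<^sub>i + B\<^sub>j + U\<^sub>x\<close>, so it has at least \<open>m |A\<^sub>i|\<^sup>t |B\<^sub>j|\<^sup>1\<^sup>-\<^sup>t\<close> elements. Summing over \<open>w\<close> reduces the
  theorem to a weighted form of the inequality defining \<open>\<beta>\<^sub>p(\<phi>(U))\<close>: if \<open>|S + T + V| \<ge> b |S|\<^sup>t |T|\<^sup>1\<^sup>-\<^sup>t\<close>
  for all \<open>S\<close>, \<open>T\<close> and \<open>F(w) \<ge> \<rho>\<^sub>i\<^sup>t \<sigma>\<^sub>j\<^sup>1\<^sup>-\<^sup>t\<close> whenever \<open>w \<in> i + j + V\<close>, then the sum of \<open>F\<close> over the cover is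
  at least \<open>b (\<Sigma>\<rho>)\<^sup>t (\<Sigma>\<sigma>)\<^sup>1\<^sup>-\<^sup>t\<close>. That is proved by induction on \<open>|I| + |J|\<close>, peeling off the row or
  column of least weight, possibly only in part; superadditivity of \<open>(x, y) \<mapsto> x\<^sup>t y\<^sup>1\<^sup>-\<^sup>t\<close> pays
  for the peeled mass.\<close>

section \<open>Weighted geometric means\<close>

definition gmean :: "real \<Rightarrow> real \<Rightarrow> real \<Rightarrow> real" where
  "gmean t x y = x powr t * y powr (1 - t)"

lemma gmean_nonneg: "0 \<le> gmean t x y"
  by (simp add: gmean_def)

lemma gmean_pos: "0 < x \<Longrightarrow> 0 < y \<Longrightarrow> 0 < gmean t x y"
  by (simp add: gmean_def)

lemma gmean_zero [simp]: "gmean t 0 y = 0" "gmean t x 0 = 0"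
  by (simp_all add: gmean_def)

lemma gmean_swap: "gmean (1 - t) y x = gmean t x y"
  by (simp add: gmean_def)

lemma gmean_mult:
  assumes "0 \<le> a" "0 \<le> b" "0 \<le> c" "0 \<le> d"
  shows "gmean t (a * b) (c * d) = gmean t a c * gmean t b d"
  using assms by (simp add: gmean_def powr_mult)

lemma gmean_scale:
  assumes "0 \<le> c" "0 \<le> x" "0 \<le> y"
  shows "gmean t (c * x) (c * y) = c * gmean t x y"
  using assms by (simp add: gmean_mult) (simp add: gmean_def powr_add[symmetric])

lemma gmean_mono:
  assumes "0 < t" "t < 1" "0 \<le> x" "x \<le> x'" "0 \<le> y" "y \<le> y'"
  shows "gmean t x y \<le> gmean t x' y'"
  using assms unfolding gmean_def by (intro mult_mono powr_mono2) auto

lemma gmean_le_arith_mean: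
  assumes "0 < t" "t < 1" "0 \<le> x" "0 \<le> y"
  shows "gmean t x y \<le> t * x + (1 - t) * y"
proof (cases "x = 0 \<or> y = 0")
  case True
  then show ?thesis using assms by auto
next
  case False
  then show ?thesis
    using Youngs_inequality_0[of t "1 - t" x y] assms by (simp add: gmean_def)
qed

lemma gmean_superadd:
  assumes "0 < t" "t < 1" "0 \<le> x" "0 \<le> y" "0 \<le> z" "0 \<le> w"
  shows "gmean t x z + gmean t y w \<le> gmean t (x + y) (z + w)"
proof (cases "x + y = 0 \<or> z + w = 0")
  case True
  then have "(x = 0 \<and> y = 0) \<or> (z = 0 \<and> w = 0)" using assms by linarith
  then show ?thesis by auto
next
  case False
  define X Z where "X = x + y" and "Z = z + w"
  have "X > 0" "Z > 0" using False assms by (auto simp: X_def Z_def)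
  have "gmean t (x / X) (z / Z) + gmean t (y / X) (w / Z)
      \<le> (t * (x / X) + (1 - t) * (z / Z)) + (t * (y / X) + (1 - t) * (w / Z))"
    using assms \<open>X > 0\<close> \<open>Z > 0\<close> by (intro add_mono gmean_le_arith_mean) auto
  also have "\<dots> = t * ((x + y) / X) + (1 - t) * ((z + w) / Z)"
    by (simp add: add_divide_distrib algebra_simps)
  also have "\<dots> = 1"
    using \<open>X > 0\<close> \<open>Z > 0\<close> by (simp add: X_def Z_def)
  finally have "gmean t X Z * (gmean t (x / X) (z / Z) + gmean t (y / X) (w / Z)) \<le> gmean t X Z"
    using gmean_nonneg by (simp add: mult_left_le)
  moreover have "gmean t X Z * gmean t (u / X) (v / Z) = gmean t u v" if "0 \<le> u" "0 \<le> v" for u v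
    using that \<open>X > 0\<close> \<open>Z > 0\<close> by (simp add: gmean_mult[symmetric])
  ultimately show ?thesis
    using assms by (simp add: X_def Z_def distrib_left)
qed

section \<open>A weighted covering inequality\<close>

definition fraction_on :: "'a set \<Rightarrow> ('a \<Rightarrow> real) \<Rightarrow> bool" where
  "fraction_on I \<mu> \<longleftrightarrow> (\<forall>i\<in>I. 0 \<le> \<mu> i \<and> \<mu> i \<le> 1)"

lemma sum_eq_0_if_weighted_sum_eq_0:
  fixes \<mu> \<rho> :: "'a \<Rightarrow> real"
  assumes "finite I" "\<forall>i\<in>I. 0 \<le> \<mu> i" "\<forall>i\<in>I. 0 < \<rho> i" "(\<Sum>i\<in>I. \<mu> i * \<rho> i) = 0"
  shows "sum \<mu> I = 0"
proof -
  have "\<forall>i\<in>I. \<mu> i * \<rho> i = 0"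
    using assms by (subst sum_nonneg_eq_0_iff[symmetric]) auto
  then have "\<forall>i\<in>I. \<mu> i = 0"
    using assms(3) by fastforce
  then show ?thesis
    by simp
qed

lemma fraction_on_decrease:
  assumes "fraction_on J \<nu>" "j0 \<in> J" "finite J" "0 \<le> \<delta>" "\<delta> \<le> \<nu> j0"
  shows "\<exists>\<nu>'. fraction_on J \<nu>' \<and> sum \<nu>' J = sum \<nu> J - \<delta>
               \<and> (\<Sum>j\<in>J. \<nu>' j * \<sigma> j) = (\<Sum>j\<in>J. \<nu> j * \<sigma> j) - \<delta> * \<sigma> j0"
proof (intro exI conjI)
  let ?\<nu>' = "\<lambda>j. \<nu> j - (if j = j0 then \<delta> else 0)"
  show "fraction_on J ?\<nu>'"
    using assms(1,4,5) by (auto simp: fraction_on_def)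
  show "sum ?\<nu>' J = sum \<nu> J - \<delta>"
    using assms(2,3) by (simp add: sum_subtractf)
  show "(\<Sum>j\<in>J. ?\<nu>' j * \<sigma> j) = (\<Sum>j\<in>J. \<nu> j * \<sigma> j) - \<delta> * \<sigma> j0"
    using assms(2,3) by (simp add: left_diff_distrib sum_subtractf if_distrib[of "\<lambda>x. x * _"])
qed

locale weighted_cover =
  fixes t b :: real and E :: "'i \<Rightarrow> 'j \<Rightarrow> 'w set"
    and I0 :: "'i set" and J0 :: "'j set"
    and \<rho> :: "'i \<Rightarrow> real" and \<sigma> :: "'j \<Rightarrow> real" and F :: "'w \<Rightarrow> real"
  assumes t_bounds: "0 < t" "t < 1"
    and b_nonneg: "0 \<le> b"
    and finite_index: "finite I0" "finite J0"
    and finite_E: "\<And>i j. i \<in> I0 \<Longrightarrow> j \<in> J0 \<Longrightarrow> finite (E i j)"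
    and card_UN_ge: "\<And>S T. S \<subseteq> I0 \<Longrightarrow> T \<subseteq> J0 \<Longrightarrow>
                       b * gmean t (card S) (card T) \<le> card (\<Union>i\<in>S. \<Union>j\<in>T. E i j)"
    and \<rho>_pos: "\<And>i. i \<in> I0 \<Longrightarrow> 0 < \<rho> i"
    and \<sigma>_pos: "\<And>j. j \<in> J0 \<Longrightarrow> 0 < \<sigma> j"
    and F_ge: "\<And>i j w. i \<in> I0 \<Longrightarrow> j \<in> J0 \<Longrightarrow> w \<in> E i j \<Longrightarrow> gmean t (\<rho> i) (\<sigma> j) \<le> F w"
begin

definition cover :: "'i set \<Rightarrow> 'j set \<Rightarrow> 'w set" where
  "cover I J = (\<Union>i\<in>I. \<Union>j\<in>J. E i j)"

lemma finite_cover: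
  assumes "I \<subseteq> I0" "J \<subseteq> J0"
  shows "finite (cover I J)"
proof -
  have "finite I" "finite J"
    using assms finite_index finite_subset by auto
  then show ?thesis
    using assms finite_E unfolding cover_def by (intro finite_UN_I) auto
qed

lemma card_cover_ge:
  assumes "I \<subseteq> I0" "J \<subseteq> J0" "fraction_on I \<mu>" "fraction_on J \<nu>"
  shows "b * gmean t (sum \<mu> I) (sum \<nu> J) \<le> card (cover I J)"
proof -
  have "sum \<mu> I \<le> card I" "sum \<nu> J \<le> card J"
    using assms(3,4) sum_bounded_above[of I \<mu> 1] sum_bounded_above[of J \<nu> 1]
    by (auto simp: fraction_on_def)
  then have "gmean t (sum \<mu> I) (sum \<nu> J) \<le> gmean t (card I) (card J)"
    using assms(3,4) t_bounds by (intro gmean_mono sum_nonneg) (auto simp: fraction_on_def)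
  then show ?thesis
    using card_UN_ge[OF assms(1,2)] b_nonneg unfolding cover_def
    by (meson mult_left_mono order_trans)
qed

lemma F_ge_on_cover:
  assumes "I \<subseteq> I0" "J \<subseteq> J0" "\<forall>i\<in>I. \<forall>j\<in>J. h \<le> gmean t (\<rho> i) (\<sigma> j)" "w \<in> cover I J"
  shows "h \<le> F w"
proof -
  obtain i j where "i \<in> I" "j \<in> J" "w \<in> E i j"
    using assms(4) unfolding cover_def by blast
  moreover from this have "gmean t (\<rho> i) (\<sigma> j) \<le> F w"
    using assms(1,2) by (intro F_ge) auto
  ultimately have "h \<le> gmean t (\<rho> i) (\<sigma> j)" "gmean t (\<rho> i) (\<sigma> j) \<le> F w"
    using assms(3) by auto
  then show ?thesis
    by linarith
qed

lemma gmean_at_minima_le: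
  assumes "I \<subseteq> I0" "J \<subseteq> J0" "i0 \<in> I" "\<forall>i\<in>I. \<rho> i0 \<le> \<rho> i" "j0 \<in> J" "\<forall>j\<in>J. \<sigma> j0 \<le> \<sigma> j"
  shows "\<forall>i\<in>I. \<forall>j\<in>J. gmean t (\<rho> i0) (\<sigma> j0) \<le> gmean t (\<rho> i) (\<sigma> j)"
proof -
  have "0 < \<rho> i0" "0 < \<sigma> j0"
    using assms \<rho>_pos \<sigma>_pos by auto
  then show ?thesis
    using assms t_bounds by (auto intro: gmean_mono)
qed

text \<open>Invariant of the induction: \<open>\<mu>\<close>, \<open>\<nu>\<close> are fractional multiplicities, so that a row or column
  can be peeled off in part, and the \<open>h\<close>-term is the surplus that a uniform lower bound \<open>h\<close> on \<open>F\<close>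
  yields on the cover beyond the \<open>b\<close>-estimate.\<close>
definition interpolated_bound :: "'i set \<Rightarrow> 'j set \<Rightarrow> ('i \<Rightarrow> real) \<Rightarrow> ('j \<Rightarrow> real) \<Rightarrow> real \<Rightarrow> bool"
  where "interpolated_bound I J \<mu> \<nu> h \<longleftrightarrow>
    b * gmean t (\<Sum>i\<in>I. \<mu> i * \<rho> i) (\<Sum>j\<in>J. \<nu> j * \<sigma> j)
      + h * (card (cover I J) - b * gmean t (sum \<mu> I) (sum \<nu> J))
    \<le> (\<Sum>w\<in>cover I J. F w)"

lemma interpolated_bound_antimono:
  assumes "I \<subseteq> I0" "J \<subseteq> J0" "fraction_on I \<mu>" "fraction_on J \<nu>" "h \<le> h'"
    and "interpolated_bound I J \<mu> \<nu> h'"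
  shows "interpolated_bound I J \<mu> \<nu> h"
proof -
  have "h * (card (cover I J) - b * gmean t (sum \<mu> I) (sum \<nu> J))
      \<le> h' * (card (cover I J) - b * gmean t (sum \<mu> I) (sum \<nu> J))"
    using card_cover_ge[OF assms(1-4)] assms(5) by (intro mult_right_mono) auto
  then show ?thesis
    using assms(6) unfolding interpolated_bound_def by linarith
qed

lemma interpolated_bound_degenerate:
  assumes "I \<subseteq> I0" "J \<subseteq> J0" "fraction_on I \<mu>" "fraction_on J \<nu>"
    and "\<forall>i\<in>I. \<forall>j\<in>J. h \<le> gmean t (\<rho> i) (\<sigma> j)"
    and "(\<Sum>i\<in>I. \<mu> i * \<rho> i) = 0 \<or> (\<Sum>j\<in>J. \<nu> j * \<sigma> j) = 0"
  shows "interpolated_bound I J \<mu> \<nu> h"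
proof -
  have "finite I" "finite J"
    using assms(1,2) finite_index finite_subset by auto
  moreover have "\<forall>i\<in>I. 0 < \<rho> i" "\<forall>j\<in>J. 0 < \<sigma> j"
    using assms(1,2) \<rho>_pos \<sigma>_pos by auto
  ultimately have "sum \<mu> I = 0 \<or> sum \<nu> J = 0"
    using assms(3,4,6) sum_eq_0_if_weighted_sum_eq_0[of I \<mu> \<rho>]
      sum_eq_0_if_weighted_sum_eq_0[of J \<nu> \<sigma>]
    unfolding fraction_on_def by blast
  moreover have "card (cover I J) * h \<le> sum F (cover I J)"
    using F_ge_on_cover[OF assms(1,2,5)] by (intro sum_bounded_below) auto
  ultimately show ?thesis
    using assms(6) unfolding interpolated_bound_def by (auto simp: mult.commute)
qed

lemma transpose: "weighted_cover (1 - t) b (\<lambda>j i. E i j) J0 I0 \<sigma> \<rho> F"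
proof
  fix T S assume "T \<subseteq> J0" "S \<subseteq> I0"
  moreover have "(\<Union>j\<in>T. \<Union>i\<in>S. E i j) = (\<Union>i\<in>S. \<Union>j\<in>T. E i j)"
    by blast
  ultimately show "b * gmean (1 - t) (card T) (card S) \<le> card (\<Union>j\<in>T. \<Union>i\<in>S. E i j)"
    using card_UN_ge by (simp add: gmean_swap)
next
  fix j i w assume "j \<in> J0" "i \<in> I0" "w \<in> E i j"
  then show "gmean (1 - t) (\<sigma> j) (\<rho> i) \<le> F w"
    using F_ge by (simp add: gmean_swap)
next
  show "0 < 1 - t" "1 - t < 1"
    using t_bounds by auto
qed (use b_nonneg finite_index finite_E \<rho>_pos \<sigma>_pos in auto)

lemma sum_cover_mono:
  assumes "I' \<subseteq> I" "J' \<subseteq> J" "I \<subseteq> I0" "J \<subseteq> J0" "\<forall>i\<in>I. \<forall>j\<in>J. h \<le> gmean t (\<rho> i) (\<sigma> j)"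
  shows "sum F (cover I' J') + h * (real (card (cover I J)) - card (cover I' J')) \<le> sum F (cover I J)"
proof -
  have sub: "cover I' J' \<subseteq> cover I J" and fin: "finite (cover I J)"
    using assms(1-4) finite_cover by (auto simp: cover_def)
  then have "real (card (cover I J - cover I' J')) = real (card (cover I J)) - card (cover I' J')"
    by (simp add: card_Diff_subset card_mono finite_subset of_nat_diff)
  moreover have "card (cover I J - cover I' J') * h \<le> sum F (cover I J - cover I' J')"
    using F_ge_on_cover[OF assms(3-5)] by (intro sum_bounded_below) auto
  ultimately show ?thesis
    using sum.subset_diff[OF sub fin, of F] by (simp add: mult.commute)
qed

lemma peel_row_step:
  assumes IJ: "I \<subseteq> I0" "J \<subseteq> J0"
    and i0: "i0 \<in> I" "\<forall>i\<in>I. \<rho> i0 \<le> \<rho> i" and j0: "j0 \<in> J" "\<forall>j\<in>J. \<sigma> j0 \<le> \<sigma> j"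
    and nonneg: "0 \<le> \<mu> i0" "0 \<le> \<delta>" "0 \<le> sum \<mu> I - \<mu> i0" "0 \<le> sum \<nu> J - \<delta>"
    and peeled: "gmean t (\<rho> i0) (\<sigma> j0) * gmean t (\<mu> i0) \<delta>
                   = \<tau> * gmean t (\<Sum>i\<in>I. \<mu> i * \<rho> i) (\<Sum>j\<in>J. \<nu> j * \<sigma> j)"
    and rest: "b * ((1 - \<tau>) * gmean t (\<Sum>i\<in>I. \<mu> i * \<rho> i) (\<Sum>j\<in>J. \<nu> j * \<sigma> j))
                 + gmean t (\<rho> i0) (\<sigma> j0)
                   * (card (cover (I - {i0}) J) - b * gmean t (sum \<mu> I - \<mu> i0) (sum \<nu> J - \<delta>))
               \<le> sum F (cover (I - {i0}) J)"
  shows "interpolated_bound I J \<mu> \<nu> (gmean t (\<rho> i0) (\<sigma> j0))"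
proof -
  define h \<Psi> \<Phi>' where "h = gmean t (\<rho> i0) (\<sigma> j0)"
    and "\<Psi> = gmean t (\<Sum>i\<in>I. \<mu> i * \<rho> i) (\<Sum>j\<in>J. \<nu> j * \<sigma> j)"
    and "\<Phi>' = gmean t (sum \<mu> I - \<mu> i0) (sum \<nu> J - \<delta>)"
  have "\<Phi>' + gmean t (\<mu> i0) \<delta> \<le> gmean t (sum \<mu> I) (sum \<nu> J)"
    using gmean_superadd[of t "sum \<mu> I - \<mu> i0" "\<mu> i0" "sum \<nu> J - \<delta>" \<delta>] t_bounds nonneg
    by (simp add: \<Phi>'_def)
  then have "h * (\<Phi>' + gmean t (\<mu> i0) \<delta>) \<le> h * gmean t (sum \<mu> I) (sum \<nu> J)"
    by (rule mult_left_mono) (simp add: h_def gmean_nonneg)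
  then have "b * (h * \<Phi>' + \<tau> * \<Psi>) \<le> b * (h * gmean t (sum \<mu> I) (sum \<nu> J))"
    using b_nonneg peeled by (intro mult_left_mono) (simp_all add: distrib_left h_def \<Psi>_def)
  then show ?thesis
    using rest sum_cover_mono[of "I - {i0}" I J J h] IJ gmean_at_minima_le[OF IJ i0 j0]
    unfolding interpolated_bound_def h_def[symmetric] \<Psi>_def[symmetric] \<Phi>'_def[symmetric]
    by (simp add: algebra_simps)
qed

lemma peel_row:
  assumes IJ: "I \<subseteq> I0" "J \<subseteq> J0" and \<mu>: "fraction_on I \<mu>" and \<nu>: "fraction_on J \<nu>"
    and i0: "i0 \<in> I" "\<forall>i\<in>I. \<rho> i0 \<le> \<rho> i" and j0: "j0 \<in> J" "\<forall>j\<in>J. \<sigma> j0 \<le> \<sigma> j"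
    and pos: "0 < (\<Sum>i\<in>I. \<mu> i * \<rho> i)" "0 < (\<Sum>j\<in>J. \<nu> j * \<sigma> j)"
    and ratio: "\<mu> i0 * \<rho> i0 / (\<Sum>i\<in>I. \<mu> i * \<rho> i) \<le> \<nu> j0 * \<sigma> j0 / (\<Sum>j\<in>J. \<nu> j * \<sigma> j)"
    and IH: "\<And>\<nu>'. fraction_on J \<nu>' \<Longrightarrow>
               interpolated_bound (I - {i0}) J \<mu> \<nu>' (gmean t (\<rho> i0) (\<sigma> j0))"
  shows "interpolated_bound I J \<mu> \<nu> (gmean t (\<rho> i0) (\<sigma> j0))"
proof -
  define A C where "A = (\<Sum>i\<in>I. \<mu> i * \<rho> i)" and "C = (\<Sum>j\<in>J. \<nu> j * \<sigma> j)"
  \<comment> \<open>Row \<open>i0\<close> carries the fraction \<open>\<tau>\<close> of the mass \<open>A\<close>; lowering \<open>\<nu> j0\<close> by \<open>\<delta>\<close> removes the same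
    fraction of \<open>C\<close>, so both masses shrink by the factor \<open>1 - \<tau>\<close>.\<close>
  define \<tau> where "\<tau> = \<mu> i0 * \<rho> i0 / A"
  define \<delta> where "\<delta> = \<tau> * C / \<sigma> j0"
  have fin: "finite I" "finite J"
    using IJ finite_index finite_subset by auto
  have "0 < \<rho> i0" "0 < \<sigma> j0" "0 \<le> \<mu> i0" "A > 0" "C > 0"
    using i0 j0 IJ \<rho>_pos \<sigma>_pos \<mu> pos by (auto simp: fraction_on_def A_def C_def)
  have rest_nonneg: "0 \<le> (\<Sum>i\<in>I - {i0}. \<mu> i * \<rho> i)" "0 \<le> sum \<mu> (I - {i0})"
    using \<mu> IJ by (auto simp: fraction_on_def intro!: sum_nonneg mult_nonneg_nonneg less_imp_le[OF \<rho>_pos])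
  have A_rest: "(\<Sum>i\<in>I - {i0}. \<mu> i * \<rho> i) = (1 - \<tau>) * A"
    using fin i0 \<open>A > 0\<close> by (simp add: A_def \<tau>_def sum_diff1 algebra_simps)
  have "0 \<le> \<tau>" "\<tau> \<le> 1"
    using A_rest rest_nonneg \<open>A > 0\<close> \<open>0 < \<rho> i0\<close> \<open>0 \<le> \<mu> i0\<close>
    by (simp_all add: \<tau>_def zero_le_mult_iff)
  have \<delta>\<sigma>: "\<delta> * \<sigma> j0 = \<tau> * C"
    using \<open>0 < \<sigma> j0\<close> by (simp add: \<delta>_def)
  have "\<tau> \<le> \<nu> j0 * \<sigma> j0 / C"
    using ratio by (simp add: \<tau>_def A_def C_def)
  then have "\<delta> * \<sigma> j0 \<le> \<nu> j0 * \<sigma> j0"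
    using \<open>C > 0\<close> by (simp add: \<delta>\<sigma> le_divide_eq)
  then have "\<delta> \<le> \<nu> j0"
    using \<open>0 < \<sigma> j0\<close> by simp
  moreover have "0 \<le> \<delta>"
    using \<open>0 \<le> \<tau>\<close> \<open>C > 0\<close> \<open>0 < \<sigma> j0\<close> by (simp add: \<delta>_def)
  ultimately obtain \<nu>' where \<nu>': "fraction_on J \<nu>'" "sum \<nu>' J = sum \<nu> J - \<delta>"
      "(\<Sum>j\<in>J. \<nu>' j * \<sigma> j) = (1 - \<tau>) * C"
    using fraction_on_decrease[OF \<nu> j0(1) fin(2), of \<delta> \<sigma>] \<delta>\<sigma> by (auto simp: C_def algebra_simps)
  have "0 \<le> sum \<nu>' J"
    using \<nu>'(1) unfolding fraction_on_def by (auto intro: sum_nonneg)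
  then have "0 \<le> sum \<mu> I - \<mu> i0" "0 \<le> sum \<nu> J - \<delta>"
    using rest_nonneg(2) \<nu>'(2) fin i0 by (simp_all add: sum_diff1)
  moreover have "gmean t (\<rho> i0) (\<sigma> j0) * gmean t (\<mu> i0) \<delta> = gmean t (\<tau> * A) (\<tau> * C)"
    using \<open>0 < \<rho> i0\<close> \<open>0 < \<sigma> j0\<close> \<open>0 \<le> \<mu> i0\<close> \<open>0 \<le> \<delta>\<close> \<open>A > 0\<close> \<delta>\<sigma>
    by (simp add: gmean_mult[symmetric] \<tau>_def mult.commute)
  moreover have "gmean t (\<tau> * A) (\<tau> * C) = \<tau> * gmean t A C"
    using \<open>0 \<le> \<tau>\<close> \<open>A > 0\<close> \<open>C > 0\<close> by (simp add: gmean_scale)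
  moreover have "interpolated_bound (I - {i0}) J \<mu> \<nu>' (gmean t (\<rho> i0) (\<sigma> j0))"
    using IH[OF \<nu>'(1)] .
  ultimately show ?thesis
    using \<open>0 \<le> \<mu> i0\<close> \<open>0 \<le> \<delta>\<close> \<open>0 \<le> \<tau>\<close> \<open>\<tau> \<le> 1\<close> \<open>A > 0\<close> \<open>C > 0\<close> fin i0
    by (intro peel_row_step[OF IJ i0 j0, of \<mu> \<delta> \<nu> \<tau>])
       (simp_all add: interpolated_bound_def A_rest \<nu>' sum_diff1 gmean_scale A_def C_def)
qed

lemma peel_column:
  assumes IJ: "I \<subseteq> I0" "J \<subseteq> J0" and \<mu>: "fraction_on I \<mu>" and \<nu>: "fraction_on J \<nu>"
    and i0: "i0 \<in> I" "\<forall>i\<in>I. \<rho> i0 \<le> \<rho> i" and j0: "j0 \<in> J" "\<forall>j\<in>J. \<sigma> j0 \<le> \<sigma> j"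
    and pos: "0 < (\<Sum>i\<in>I. \<mu> i * \<rho> i)" "0 < (\<Sum>j\<in>J. \<nu> j * \<sigma> j)"
    and ratio: "\<nu> j0 * \<sigma> j0 / (\<Sum>j\<in>J. \<nu> j * \<sigma> j) \<le> \<mu> i0 * \<rho> i0 / (\<Sum>i\<in>I. \<mu> i * \<rho> i)"
    and IH: "\<And>\<mu>'. fraction_on I \<mu>' \<Longrightarrow>
               interpolated_bound I (J - {j0}) \<mu>' \<nu> (gmean t (\<rho> i0) (\<sigma> j0))"
  shows "interpolated_bound I J \<mu> \<nu> (gmean t (\<rho> i0) (\<sigma> j0))"
proof -
  interpret transposed: weighted_cover "1 - t" b "\<lambda>j i. E i j" J0 I0 \<sigma> \<rho> F
    by (rule transpose)
  have swap: "interpolated_bound I' J' \<mu>' \<nu>' g \<longleftrightarrow> transposed.interpolated_bound J' I' \<nu>' \<mu>' g"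
    for I' J' \<mu>' \<nu>' g
  proof -
    have "transposed.cover J' I' = cover I' J'"
      unfolding cover_def transposed.cover_def by blast
    then show ?thesis
      unfolding interpolated_bound_def transposed.interpolated_bound_def by (simp add: gmean_swap)
  qed
  have h: "gmean t (\<rho> i0) (\<sigma> j0) = gmean (1 - t) (\<sigma> j0) (\<rho> i0)"
    by (simp add: gmean_swap)
  show ?thesis
    unfolding swap h
    by (rule transposed.peel_row[OF IJ(2,1) \<nu> \<mu> j0 i0 pos(2,1) ratio]) (use IH in \<open>simp add: swap h\<close>)
qed

lemma interpolated_bound_holds:
  assumes "I \<subseteq> I0" "J \<subseteq> J0" "fraction_on I \<mu>" "fraction_on J \<nu>"
    and "\<forall>i\<in>I. \<forall>j\<in>J. h \<le> gmean t (\<rho> i) (\<sigma> j)"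
  shows "interpolated_bound I J \<mu> \<nu> h"
  using assms
proof (induction "card I + card J" arbitrary: I J \<mu> \<nu> h rule: less_induct)
  case less
  note IJ = less.prems(1,2) and frac = less.prems(3,4)
  have fin: "finite I" "finite J"
    using IJ finite_index finite_subset by auto
  show ?case
  proof (cases "(\<Sum>i\<in>I. \<mu> i * \<rho> i) = 0 \<or> (\<Sum>j\<in>J. \<nu> j * \<sigma> j) = 0")
    case True
    then show ?thesis
      using interpolated_bound_degenerate less.prems by blast
  next
    case False
    have "0 \<le> (\<Sum>i\<in>I. \<mu> i * \<rho> i)" "0 \<le> (\<Sum>j\<in>J. \<nu> j * \<sigma> j)"
      using frac IJ by (auto simp: fraction_on_def
          intro!: sum_nonneg mult_nonneg_nonneg less_imp_le[OF \<rho>_pos] less_imp_le[OF \<sigma>_pos])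
    with False have pos: "0 < (\<Sum>i\<in>I. \<mu> i * \<rho> i)" "0 < (\<Sum>j\<in>J. \<nu> j * \<sigma> j)"
      by auto
    then have "I \<noteq> {}" "J \<noteq> {}"
      by auto
    obtain i0 where i0: "i0 \<in> I" "\<forall>i\<in>I. \<rho> i0 \<le> \<rho> i"
      using arg_min_if_finite[OF fin(1) \<open>I \<noteq> {}\<close>, of \<rho>] by (meson not_le)
    obtain j0 where j0: "j0 \<in> J" "\<forall>j\<in>J. \<sigma> j0 \<le> \<sigma> j"
      using arg_min_if_finite[OF fin(2) \<open>J \<noteq> {}\<close>, of \<sigma>] by (meson not_le)
    define h' where "h' = gmean t (\<rho> i0) (\<sigma> j0)"
    have h'_le: "\<forall>i\<in>I. \<forall>j\<in>J. h' \<le> gmean t (\<rho> i) (\<sigma> j)"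
      unfolding h'_def using gmean_at_minima_le[OF IJ i0 j0] .
    have "interpolated_bound I J \<mu> \<nu> h'"
    proof (cases "\<mu> i0 * \<rho> i0 / (\<Sum>i\<in>I. \<mu> i * \<rho> i) \<le> \<nu> j0 * \<sigma> j0 / (\<Sum>j\<in>J. \<nu> j * \<sigma> j)")
      case True
      have "interpolated_bound (I - {i0}) J \<mu> \<nu>' h'" if "fraction_on J \<nu>'" for \<nu>'
        using less.hyps[of "I - {i0}" J \<mu> \<nu>' h'] card_Diff1_less[OF fin(1) i0(1)] IJ frac that h'_le
        by (auto simp: fraction_on_def)
      then show ?thesis
        unfolding h'_def using peel_row[OF IJ frac i0 j0 pos True] by blast
    next
      case False
      have "interpolated_bound I (J - {j0}) \<mu>' \<nu> h'" if "fraction_on I \<mu>'" for \<mu>'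
        using less.hyps[of I "J - {j0}" \<mu>' \<nu> h'] card_Diff1_less[OF fin(2) j0(1)] IJ frac that h'_le
        by (auto simp: fraction_on_def)
      moreover have "\<nu> j0 * \<sigma> j0 / (\<Sum>j\<in>J. \<nu> j * \<sigma> j) \<le> \<mu> i0 * \<rho> i0 / (\<Sum>i\<in>I. \<mu> i * \<rho> i)"
        using False by linarith
      ultimately show ?thesis
        unfolding h'_def using peel_column[OF IJ frac i0 j0 pos] by blast
    qed
    moreover have "h \<le> h'"
      using less.prems(5) i0 j0 by (auto simp: h'_def)
    ultimately show ?thesis
      using interpolated_bound_antimono[OF IJ frac] by blast
  qed
qed

lemma sum_cover_ge: "b * gmean t (sum \<rho> I0) (sum \<sigma> J0) \<le> sum F (cover I0 J0)"
  using interpolated_bound_holds[of I0 J0 "\<lambda>_. 1" "\<lambda>_. 1" 0] gmean_nonneg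
  by (simp add: interpolated_bound_def fraction_on_def)

end

section \<open>Passing to the quotient group\<close>

lemma beta_mult_gmean_le:
  assumes "A \<subseteq> carrier K" "finite A" "B \<subseteq> carrier K" "finite B"
  shows "beta K p U * gmean (1 / p) (card A) (card B) \<le> card (set_mult K (set_mult K A B) U)"
proof (cases "A = {} \<or> B = {}")
  case True
  then show ?thesis
    by auto
next
  case False
  then have "beta K p U \<le> card (set_mult K (set_mult K A B) U) / gmean (1 / p) (card A) (card B)"
    unfolding beta_def gmean_def
    by (intro cINF_lower2[where x="(A, B)"]) (use assms in \<open>auto intro!: bdd_belowI[where m=0]\<close>)
  moreover have "0 < gmean (1 / p) (card A) (card B)"
    using assms False by (simp add: gmean_pos card_gt_0_iff)
  ultimately show ?thesis
    by (simp add: pos_le_divide_eq)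
qed

lemma beta_greatest:
  assumes "carrier K \<noteq> {}"
    and "\<And>A B. A \<subseteq> carrier K \<Longrightarrow> finite A \<Longrightarrow> A \<noteq> {} \<Longrightarrow> B \<subseteq> carrier K \<Longrightarrow> finite B \<Longrightarrow> B \<noteq> {} \<Longrightarrow>
               c * gmean (1 / p) (card A) (card B) \<le> card (set_mult K (set_mult K A B) U)"
  shows "c \<le> beta K p U"
  unfolding beta_def
proof (rule cINF_greatest)
  obtain x where "x \<in> carrier K"
    using assms(1) by blast
  then show "{(A, B). A \<subseteq> carrier K \<and> finite A \<and> A \<noteq> {} \<and> B \<subseteq> carrier K \<and> finite B \<and> B \<noteq> {}} \<noteq> {}"
    by blast
next
  fix AB assume "AB \<in> {(A, B). A \<subseteq> carrier K \<and> finite A \<and> A \<noteq> {} \<and> B \<subseteq> carrier K \<and> finite B \<and> B \<noteq> {}}"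
  then obtain A B where AB: "AB = (A, B)"
    and A: "A \<subseteq> carrier K" "finite A" "A \<noteq> {}" and B: "B \<subseteq> carrier K" "finite B" "B \<noteq> {}"
    by blast
  have "0 < gmean (1 / p) (card A) (card B)"
    using A B by (simp add: gmean_pos card_gt_0_iff)
  then show "c \<le> card (set_mult K (set_mult K (fst AB) (snd AB)) U) /
                 (card (fst AB) powr (1 / p) * card (snd AB) powr (1 - 1 / p))"
    using assms(2)[OF A B] by (simp add: AB pos_le_divide_eq gmean_def)
qed

lemma beta_nonneg: "carrier K \<noteq> {} \<Longrightarrow> 0 \<le> beta K p U"
  by (rule beta_greatest) simp_all

lemma (in normal) fibre_set_mult_subset:
  assumes "X \<subseteq> carrier G" "Y \<subseteq> carrier G" "Z \<subseteq> carrier G"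
    and "x \<in> carrier G" "y \<in> carrier G" "z \<in> carrier G"
  shows "({x' \<in> X. H #> x' = H #> x} <#> {y' \<in> Y. H #> y' = H #> y}) <#> {z' \<in> Z. H #> z' = H #> z}
           \<subseteq> {s \<in> (X <#> Y) <#> Z. H #> s = H #> (x \<otimes> y \<otimes> z)}"
proof
  fix s assume "s \<in> ({x' \<in> X. H #> x' = H #> x} <#> {y' \<in> Y. H #> y' = H #> y}) <#> {z' \<in> Z. H #> z' = H #> z}"
  then obtain x' y' z' where s: "s = x' \<otimes> y' \<otimes> z'" "x' \<in> X" "y' \<in> Y" "z' \<in> Z"
    and cos: "H #> x' = H #> x" "H #> y' = H #> y" "H #> z' = H #> z"
    unfolding set_mult_def by blast
  have "H #> s = ((H #> x') <#> (H #> y')) <#> (H #> z')"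
    using s assms by (simp add: rcos_sum subsetD)
  also have "\<dots> = H #> (x \<otimes> y \<otimes> z)"
    using assms by (simp add: cos rcos_sum)
  finally show "s \<in> {s \<in> (X <#> Y) <#> Z. H #> s = H #> (x \<otimes> y \<otimes> z)}"
    using s unfolding set_mult_def by blast
qed

lemma (in normal) card_fibre_ge:
  assumes "A \<subseteq> carrier G" "B \<subseteq> carrier G" "U \<subseteq> carrier G" "finite A" "finite B" "finite U"
    and "a \<in> A" "b \<in> B" "u \<in> U"
  shows "beta G p {u' \<in> U. H #> u' = H #> u}
           * gmean (1 / p) (card {a' \<in> A. H #> a' = H #> a}) (card {b' \<in> B. H #> b' = H #> b})
         \<le> card {s \<in> (A <#> B) <#> U. H #> s = H #> (a \<otimes> b \<otimes> u)}"
proof -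
  have "finite ((A <#> B) <#> U)"
    using assms(4-6) by (simp add: set_mult_def)
  then have "card (({a' \<in> A. H #> a' = H #> a} <#> {b' \<in> B. H #> b' = H #> b}) <#> {u' \<in> U. H #> u' = H #> u})
      \<le> card {s \<in> (A <#> B) <#> U. H #> s = H #> (a \<otimes> b \<otimes> u)}"
    using assms by (intro card_mono fibre_set_mult_subset) auto
  moreover have "beta G p {u' \<in> U. H #> u' = H #> u}
           * gmean (1 / p) (card {a' \<in> A. H #> a' = H #> a}) (card {b' \<in> B. H #> b' = H #> b})
      \<le> card (({a' \<in> A. H #> a' = H #> a} <#> {b' \<in> B. H #> b' = H #> b}) <#> {u' \<in> U. H #> u' = H #> u})"
    using assms by (intro beta_mult_gmean_le) auto
  ultimately show ?thesis
    by linarith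
qed

lemma card_eq_sum_card_fibres: "finite A \<Longrightarrow> card A = (\<Sum>y\<in>f ` A. card {x \<in> A. f x = y})"
  using sum.image_gen[of A "\<lambda>_. 1 :: nat" f] by simp

lemma UN_set_mult_singletons:
  "(\<Union>i\<in>I. \<Union>j\<in>J. set_mult K (set_mult K {i} {j}) V) = set_mult K (set_mult K I J) V"
  by (auto simp: set_mult_def)

lemma (in normal) FactGroup_set_mult_rcos:
  assumes "a \<in> carrier G" "b \<in> carrier G" "U \<subseteq> carrier G"
  shows "({H #> a} <#>\<^bsub>G Mod H\<^esub> {H #> b}) <#>\<^bsub>G Mod H\<^esub> (r_coset G H ` U) = (\<lambda>u. H #> (a \<otimes> b \<otimes> u)) ` U"
  using assms by (auto simp: set_mult_def[of "G Mod H"] rcos_sum subsetD)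

lemma (in normal) weighted_cover_FactGroup:
  assumes "U \<subseteq> carrier G" "finite U" "1 < p" "0 < m"
    and fibres: "\<And>x. x \<in> r_coset G H ` U \<Longrightarrow> m \<le> beta G p {u \<in> U. H #> u = x}"
    and A: "A \<subseteq> carrier G" "finite A" and B: "B \<subseteq> carrier G" "finite B"
  shows "weighted_cover (1 / p) (beta (G Mod H) p (r_coset G H ` U))
           (\<lambda>i j. ({i} <#>\<^bsub>G Mod H\<^esub> {j}) <#>\<^bsub>G Mod H\<^esub> (r_coset G H ` U))
           (r_coset G H ` A) (r_coset G H ` B)
           (\<lambda>i. card {a \<in> A. H #> a = i}) (\<lambda>j. card {b \<in> B. H #> b = j})
           (\<lambda>w. card {s \<in> (A <#> B) <#> U. H #> s = w} / m)"
proof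
  have "r_coset G H ` carrier G \<subseteq> carrier (G Mod H)"
    by (simp add: carrier_FactGroup)
  then show "0 \<le> beta (G Mod H) p (r_coset G H ` U)"
    by (intro beta_nonneg) blast
  show "0 < 1 / p" "1 / p < 1"
    using assms(3) by auto
  fix I J assume "I \<subseteq> r_coset G H ` A" "J \<subseteq> r_coset G H ` B"
  moreover from this have "finite I" "finite J"
    using A(2) B(2) by (meson finite_imageI finite_subset)+
  moreover from calculation have "I \<subseteq> carrier (G Mod H)" "J \<subseteq> carrier (G Mod H)"
    using A(1) B(1) unfolding carrier_FactGroup by blast+
  ultimately show "beta (G Mod H) p (r_coset G H ` U) * gmean (1 / p) (card I) (card J)
      \<le> card (\<Union>i\<in>I. \<Union>j\<in>J. ({i} <#>\<^bsub>G Mod H\<^esub> {j}) <#>\<^bsub>G Mod H\<^esub> (r_coset G H ` U))"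
    unfolding UN_set_mult_singletons by (intro beta_mult_gmean_le)
next
  fix i j w assume "i \<in> r_coset G H ` A" "j \<in> r_coset G H ` B"
    and "w \<in> ({i} <#>\<^bsub>G Mod H\<^esub> {j}) <#>\<^bsub>G Mod H\<^esub> (r_coset G H ` U)"
  then obtain a b u where abu: "a \<in> A" "b \<in> B" "u \<in> U" "i = H #> a" "j = H #> b" "w = H #> (a \<otimes> b \<otimes> u)"
    using FactGroup_set_mult_rcos A(1) B(1) assms(1) by (auto simp: subsetD)
  have "m \<le> beta G p {u' \<in> U. H #> u' = H #> u}"
    using fibres abu(3) by blast
  then have "m * gmean (1 / p) (card {a \<in> A. H #> a = i}) (card {b \<in> B. H #> b = j})
      \<le> beta G p {u' \<in> U. H #> u' = H #> u} * gmean (1 / p) (card {a \<in> A. H #> a = i}) (card {b \<in> B. H #> b = j})"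
    by (rule mult_right_mono) (rule gmean_nonneg)
  also have "\<dots> \<le> card {s \<in> (A <#> B) <#> U. H #> s = w}"
    using card_fibre_ge[OF A(1) B(1) assms(1) A(2) B(2) assms(2) abu(1-3), of p] by (simp add: abu(4-6))
  finally show "gmean (1 / p) (card {a \<in> A. H #> a = i}) (card {b \<in> B. H #> b = j})
      \<le> card {s \<in> (A <#> B) <#> U. H #> s = w} / m"
    using assms(4) by (simp add: pos_le_divide_eq mult.commute)
qed (use assms(2) A B in \<open>auto simp: set_mult_def card_gt_0_iff\<close>)

lemma (in normal) beta_FactGroup_mult_le_card:
  assumes "U \<subseteq> carrier G" "finite U" "1 < p" "0 < m"
    and fibres: "\<And>x. x \<in> r_coset G H ` U \<Longrightarrow> m \<le> beta G p {u \<in> U. H #> u = x}"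
    and A: "A \<subseteq> carrier G" "finite A" and B: "B \<subseteq> carrier G" "finite B"
  shows "beta (G Mod H) p (r_coset G H ` U) * m * gmean (1 / p) (card A) (card B)
           \<le> card ((A <#> B) <#> U)"
proof -
  define S where "S = (A <#> B) <#> U"
  define F where "F = (\<lambda>w. card {s \<in> S. H #> s = w} / m)"
  interpret weighted_cover "1 / p" "beta (G Mod H) p (r_coset G H ` U)"
      "\<lambda>i j. ({i} <#>\<^bsub>G Mod H\<^esub> {j}) <#>\<^bsub>G Mod H\<^esub> (r_coset G H ` U)"
      "r_coset G H ` A" "r_coset G H ` B"
      "\<lambda>i. card {a \<in> A. H #> a = i}" "\<lambda>j. card {b \<in> B. H #> b = j}" F
    unfolding F_def S_def by (rule weighted_cover_FactGroup[OF assms])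
  have "finite S"
    using A B assms(2) by (simp add: S_def set_mult_def)
  have "cover (r_coset G H ` A) (r_coset G H ` B) \<subseteq> r_coset G H ` S"
  proof
    fix w assume "w \<in> cover (r_coset G H ` A) (r_coset G H ` B)"
    then obtain a b where "a \<in> A" "b \<in> B"
      and "w \<in> ({H #> a} <#>\<^bsub>G Mod H\<^esub> {H #> b}) <#>\<^bsub>G Mod H\<^esub> (r_coset G H ` U)"
      unfolding cover_def by blast
    moreover from this obtain u where "u \<in> U" "w = H #> (a \<otimes> b \<otimes> u)"
      using FactGroup_set_mult_rcos[of a b U] A(1) B(1) assms(1) by auto
    ultimately show "w \<in> r_coset G H ` S"
      unfolding S_def set_mult_def by blast
  qed
  then have "sum F (cover (r_coset G H ` A) (r_coset G H ` B)) \<le> sum F (r_coset G H ` S)"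
    using \<open>finite S\<close> assms(4) by (intro sum_mono2) (auto simp: F_def)
  also have "\<dots> = card S / m"
    using card_eq_sum_card_fibres[OF \<open>finite S\<close>, of "r_coset G H"]
    by (simp add: F_def sum_divide_distrib[symmetric])
  finally have "beta (G Mod H) p (r_coset G H ` U) * gmean (1 / p) (card A) (card B) \<le> card S / m"
    using sum_cover_ge A(2) B(2) card_eq_sum_card_fibres[of A "r_coset G H"]
      card_eq_sum_card_fibres[of B "r_coset G H"]
    by simp
  then show ?thesis
    using assms(4) by (simp add: S_def pos_le_divide_eq mult_ac)
qed

theorem mainTheorem8:
  fixes G :: "('a, 'b) monoid_scheme" and H U :: "'a set" and p :: real
  assumes "comm_group G" and "subgroup H G"
    and "U \<subseteq> carrier G" and "finite U" and "U \<noteq> {}"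
    and "1 < p"
  shows "beta G p U \<ge>
           beta (G Mod H) p ((\<lambda>u. r_coset G H u) ` U) *
           Min ((\<lambda>x. beta G p (U \<inter> {u \<in> carrier G. r_coset G H u = x}))
                  ` ((\<lambda>u. r_coset G H u) ` U))"
proof -
  interpret comm_group G by fact
  define m where "m = Min ((\<lambda>x. beta G p {u \<in> U. r_coset G H u = x}) ` r_coset G H ` U)"
  have fibre: "U \<inter> {u \<in> carrier G. r_coset G H u = x} = {u \<in> U. r_coset G H u = x}" for x
    using assms(3) by auto
  have m_le: "m \<le> beta G p {u \<in> U. r_coset G H u = x}" if "x \<in> r_coset G H ` U" for x
    unfolding m_def using assms(4) that by (intro Min_le) auto
  have "0 \<le> m"
    unfolding m_def using assms(4,5) by (subst Min_ge_iff) (auto intro!: beta_nonneg)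
  have "beta (G Mod H) p (r_coset G H ` U) * m \<le> beta G p U"
  proof (cases "m = 0")
    case True
    then show ?thesis
      using beta_nonneg[of G p U] by auto
  next
    case False
    then show ?thesis
      using normal.beta_FactGroup_mult_le_card[OF subgroup_imp_normal[OF assms(2)] assms(3,4,6)]
        m_le \<open>0 \<le> m\<close>
      by (intro beta_greatest) (auto simp: mult.assoc)
  qed
  then show ?thesis
    by (simp add: fibre m_def)
qed

end
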